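(* Let $\mathcal{H}$ be a $3$-graph and let $\mathcal{H}_t$ be a $3$-graph obtained from $\mathcal{H}$ by applying Algorithm 1 (described in the context). Let $T\subseteq V(\mathcal{H}_t)$ contain exactly one vertex from each equivalence class of $\mathcal{H}_t$. Then (a) $|\mathcal{H}_t|\ge|\mathcal{H}|$; and (b) $\mathcal{H}_t[T]$ is $2$-covered and $\mathcal{H}_t$ is a blowup of $\mathcal{H}_t[T]$.
   Context: For a vertex $v$ of a $3$-graph $\mathcal{H}$, its link is $L(v)=\{A\in\binom{V(\mathcal{H})}{2}: A\cup\{v\}\in\mathcal{H}\}$ and its degree is $d(v)=|L(v)|$. Two vertices are adjacent if some edge contains both. Two non-adjacent vertices $u,v$ are equivalent if $L(u)=L(v)$ (every vertex is equivalent to itself); $C_v$ denotes the equivalence class of $v$. Algorithm 1 (symmetrization): as long as $\mathcal{H}$ has two non-adjacent non-equivalent vertices, pick such $u,v$ with $d(u)\ge d(v)$, delete all vertices of $C_v$ (with their edges) and add $|C_v|$ new vertices, each a copy of $u$ (i.e. for every edge $E\ni u$ and each new vertex $v'$, add $E\setminus\{u\}\cup\{v'\}$), labelling the new vertices by the labels of $C_v$. Stop when no pair of non-adjacent non-equivalent vertices remains; the result is $\mathcal{H}_t$. A $3$-graph is $2$-covered if every pair of its vertices lies in some edge. A blowup of a $3$-graph $\mathcal{T}$ on $[s]$ replaces vertex $i$ by a set of size $t_i\ge1$ (pairwise disjoint) and each edge by the complete $3$-partite $3$-graph on the corresponding sets. *)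

theory Defs
  imports Main
begin

definition hypergraph3 :: "'a set \<Rightarrow> 'a set set \<Rightarrow> bool" where
  "hypergraph3 V H \<longleftrightarrow> finite V \<and> (\<forall>E\<in>H. E \<subseteq> V \<and> card E = 3)"

definition link :: "'a set \<Rightarrow> 'a set set \<Rightarrow> 'a \<Rightarrow> 'a set set" where
  "link V H v = {A. A \<subseteq> V \<and> card A = 2 \<and> A \<union> {v} \<in> H}"

definition deg :: "'a set \<Rightarrow> 'a set set \<Rightarrow> 'a \<Rightarrow> nat" where
  "deg V H v = card (link V H v)"

definition adjacent :: "'a set set \<Rightarrow> 'a \<Rightarrow> 'a \<Rightarrow> bool" where
  "adjacent H u v \<longleftrightarrow> (\<exists>E\<in>H. u \<in> E \<and> v \<in> E)"

definition equivalent :: "'a set \<Rightarrow> 'a set set \<Rightarrow> 'a \<Rightarrow> 'a \<Rightarrow> bool" where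
  "equivalent V H u v \<longleftrightarrow> u = v \<or> (\<not> adjacent H u v \<and> link V H u = link V H v)"

definition eqclass :: "'a set \<Rightarrow> 'a set set \<Rightarrow> 'a \<Rightarrow> 'a set" where
  "eqclass V H v = {w \<in> V. equivalent V H w v}"

text \<open>One step of Algorithm 1 (symmetrization). The new copies of u carry the labels of C_v,
  so the vertex set V is unchanged.\<close>
definition sym_step :: "'a set \<Rightarrow> 'a set set \<Rightarrow> 'a set set \<Rightarrow> bool" where
  "sym_step V H H' \<longleftrightarrow> (\<exists>u v. u \<in> V \<and> v \<in> V \<and> \<not> adjacent H u v \<and> \<not> equivalent V H u v
      \<and> deg V H u \<ge> deg V H v
      \<and> H' = {E \<in> H. E \<inter> eqclass V H v = {}}
             \<union> {insert w (E - {u}) | E w. E \<in> H \<and> u \<in> E \<and> w \<in> eqclass V H v})"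

definition sym_terminal :: "'a set \<Rightarrow> 'a set set \<Rightarrow> bool" where
  "sym_terminal V H \<longleftrightarrow> (\<forall>u\<in>V. \<forall>v\<in>V. \<not> adjacent H u v \<longrightarrow> equivalent V H u v)"

definition induced :: "'a set set \<Rightarrow> 'a set \<Rightarrow> 'a set set" where
  "induced H T = {E \<in> H. E \<subseteq> T}"

definition two_covered :: "'a set \<Rightarrow> 'a set set \<Rightarrow> bool" where
  "two_covered S F \<longleftrightarrow> (\<forall>x\<in>S. \<forall>y\<in>S. x \<noteq> y \<longrightarrow> (\<exists>E\<in>F. x \<in> E \<and> y \<in> E))"

text \<open>(W,G) is a blowup of (S,F): W is partitioned into nonempty parts indexed by S
  (the fibres of phi) and G is the union of the complete 3-partite 3-graphs
  on the parts corresponding to the edges of F.\<close>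
definition is_blowup :: "'a set \<Rightarrow> 'a set set \<Rightarrow> 'b set \<Rightarrow> 'b set set \<Rightarrow> bool" where
  "is_blowup W G S F \<longleftrightarrow> (\<exists>\<phi>. \<phi> ` W = S \<and>
      G = {E. E \<subseteq> W \<and> card E = 3 \<and> inj_on \<phi> E \<and> \<phi> ` E \<in> F})"

end

theory Submission
  imports Defs
begin

text \<open>Equivalent vertices have the same link, so a vertex of an edge may be exchanged for an
  equivalent one. Since \<open>u\<close> and \<open>v\<close> are non-adjacent and non-equivalent, no edge through \<open>u\<close>
  meets \<open>C_v\<close>; hence a symmetrization step removes at most \<open>|C_v| d(v)\<close> edges and adds exactly
  \<open>|C_v| d(u) \<ge> |C_v| d(v)\<close> new ones. Equivalence is transitive and its classes are independent,
  so mapping each vertex to its representative in \<open>T\<close> maps every edge injectively onto an edge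
  inside \<open>T\<close>, and exchanging back recovers the edge: this is the blowup. At termination two
  distinct vertices of \<open>T\<close> are not equivalent, hence adjacent, and the image of an edge
  containing both covers them inside \<open>T\<close>.\<close>

lemma hypergraph3_edge_subset: "hypergraph3 V H \<Longrightarrow> E \<in> H \<Longrightarrow> E \<subseteq> V"
  by (simp add: hypergraph3_def)

lemma hypergraph3_edge_card: "hypergraph3 V H \<Longrightarrow> E \<in> H \<Longrightarrow> card E = 3"
  by (simp add: hypergraph3_def)

lemma hypergraph3_edge_finite: "hypergraph3 V H \<Longrightarrow> E \<in> H \<Longrightarrow> finite E"
  using hypergraph3_edge_card card.infinite by fastforce

lemma hypergraph3_finite: "hypergraph3 V H \<Longrightarrow> finite H"
  by (meson Pow_iff finite_Pow_iff finite_subset hypergraph3_def subsetI)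

lemma adjacent_commute: "adjacent H u v \<longleftrightarrow> adjacent H v u"
  unfolding adjacent_def by blast

lemma equivalent_refl [simp]: "equivalent V H v v"
  by (simp add: equivalent_def)

lemma equivalent_sym: "equivalent V H u v \<Longrightarrow> equivalent V H v u"
  unfolding equivalent_def by (metis adjacent_commute)

lemma equivalent_in_edge_eq: "E \<in> H \<Longrightarrow> x \<in> E \<Longrightarrow> y \<in> E \<Longrightarrow> equivalent V H x y \<Longrightarrow> x = y"
  unfolding equivalent_def adjacent_def by blast

lemma deg_eqclass: "w \<in> eqclass V H v \<Longrightarrow> deg V H w = deg V H v"
  unfolding eqclass_def equivalent_def deg_def by auto

lemma edge_Diff_in_link:
  assumes "hypergraph3 V H" "E \<in> H" "x \<in> E"
  shows "E - {x} \<in> link V H x"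
  using assms hypergraph3_edge_subset[OF assms(1,2)] hypergraph3_edge_card[OF assms(1,2)]
    hypergraph3_edge_finite[OF assms(1,2)]
  by (auto simp: link_def insert_absorb)

lemma not_in_link: "hypergraph3 V H \<Longrightarrow> A \<in> link V H x \<Longrightarrow> x \<notin> A"
  unfolding link_def using hypergraph3_edge_card by (fastforce simp: insert_absorb)

lemma equivalent_exchange:
  assumes "hypergraph3 V H" "E \<in> H" "x \<in> E" "equivalent V H y x"
  shows "insert y (E - {x}) \<in> H"
proof (cases "y = x")
  case True
  then show ?thesis using assms(2,3) by (simp add: insert_absorb)
next
  case False
  then have "link V H y = link V H x" using assms(4) by (simp add: equivalent_def)
  then have "E - {x} \<in> link V H y" using edge_Diff_in_link[OF assms(1-3)] by simp
  then show ?thesis by (simp add: link_def)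
qed

lemma adjacent_equivalent:
  assumes "hypergraph3 V H" "adjacent H u w" "u \<noteq> w" "equivalent V H w v"
  shows "adjacent H u v"
proof -
  obtain E where E: "E \<in> H" "u \<in> E" "w \<in> E" using assms(2) by (auto simp: adjacent_def)
  have "insert v (E - {w}) \<in> H"
    using equivalent_exchange[OF assms(1) E(1,3) equivalent_sym[OF assms(4)]] .
  then show ?thesis
    using E(2) assms(3) by (auto simp: adjacent_def intro!: bexI[of _ "insert v (E - {w})"])
qed

lemma equivalent_trans:
  assumes "hypergraph3 V H" "equivalent V H a b" "equivalent V H b c"
  shows "equivalent V H a c"
proof (cases "a = b \<or> b = c \<or> a = c")
  case True
  then show ?thesis using assms(2,3) by auto
next
  case False
  then have ab: "link V H a = link V H b" and bc: "\<not> adjacent H b c" "link V H b = link V H c"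
    using assms(2,3) by (auto simp: equivalent_def)
  have "\<not> adjacent H a c"
    using adjacent_equivalent[OF assms(1) _ _ assms(2), of c] False bc(1)
    by (auto simp: adjacent_commute)
  then show ?thesis using ab bc(2) by (simp add: equivalent_def)
qed

lemma inj_on_equivalent_edge:
  assumes "hypergraph3 V H" "E \<in> H" "\<forall>x\<in>E. equivalent V H (f x) x"
  shows "inj_on f E"
proof (rule inj_onI)
  fix x y assume xy: "x \<in> E" "y \<in> E" "f x = f y"
  then have "equivalent V H x (f y)" "equivalent V H (f y) y"
    using assms(3) equivalent_sym by metis+
  then have "equivalent V H x y" by (rule equivalent_trans[OF assms(1)])
  then show "x = y" using equivalent_in_edge_eq[OF assms(2) xy(1,2)] by simp
qed

lemma equivalent_image_edge:
  assumes hg: "hypergraph3 V H" and E: "E \<in> H" and f: "\<forall>x\<in>E. equivalent V H (f x) x"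
  shows "f ` E \<in> H"
proof -
  have "f ` F \<union> (E - F) \<in> H" if "F \<subseteq> E" for F
    using finite_subset[OF that hypergraph3_edge_finite[OF hg E]] that
  proof (induction F rule: finite_subset_induct')
    case empty
    then show ?case using E by simp
  next
    case (insert a F)
    have "a \<notin> f ` F"
    proof
      assume "a \<in> f ` F"
      then obtain y where "y \<in> F" "a = f y" by blast
      then show False
        using insert.hyps(2-4) f equivalent_in_edge_eq[OF E, of a y V] by auto
    qed
    then have "insert (f a) ((f ` F \<union> (E - F)) - {a}) = f ` insert a F \<union> (E - insert a F)"
      by auto
    moreover have "insert (f a) ((f ` F \<union> (E - F)) - {a}) \<in> H"
      using equivalent_exchange[OF hg insert.IH] insert.hyps(2,4) f by blast
    ultimately show ?case by simp
  qed
  from this[OF order_refl] show ?thesis by simp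
qed

lemma card_edges_containing:
  assumes "hypergraph3 V H"
  shows "card {E \<in> H. x \<in> E} = deg V H x"
proof -
  have "bij_betw (\<lambda>E. E - {x}) {E \<in> H. x \<in> E} (link V H x)"
  proof (rule bij_betw_byWitness[where f' = "insert x"])
    show "(\<lambda>E. E - {x}) ` {E \<in> H. x \<in> E} \<subseteq> link V H x"
      using edge_Diff_in_link[OF assms] by blast
    show "insert x ` link V H x \<subseteq> {E \<in> H. x \<in> E}"
      by (auto simp: link_def)
    show "\<forall>A\<in>link V H x. insert x A - {x} = A"
      using not_in_link[OF assms] by blast
  qed auto
  then show ?thesis by (simp add: deg_def bij_betw_same_card)
qed

lemma card_edges_meeting_le:
  assumes "hypergraph3 V H" "finite C"
  shows "card {E \<in> H. E \<inter> C \<noteq> {}} \<le> (\<Sum>w\<in>C. deg V H w)"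
proof -
  have "{E \<in> H. E \<inter> C \<noteq> {}} = (\<Union>w\<in>C. {E \<in> H. w \<in> E})" by blast
  then have "card {E \<in> H. E \<inter> C \<noteq> {}} \<le> (\<Sum>w\<in>C. card {E \<in> H. w \<in> E})"
    using card_UN_le[OF assms(2)] by simp
  then show ?thesis by (simp add: card_edges_containing[OF assms(1)])
qed

lemma edge_disjoint_eqclass:
  assumes "hypergraph3 V H" "\<not> adjacent H u v" "\<not> equivalent V H u v" "E \<in> H" "u \<in> E"
  shows "E \<inter> eqclass V H v = {}"
proof (rule ccontr)
  assume "E \<inter> eqclass V H v \<noteq> {}"
  then obtain w where w: "w \<in> E" "equivalent V H w v" by (auto simp: eqclass_def)
  then have "u \<noteq> w" using assms(3) by blast
  moreover have "adjacent H u w" using assms(4,5) w(1) by (auto simp: adjacent_def)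
  ultimately show False using adjacent_equivalent[OF assms(1) _ _ w(2)] assms(2) by blast
qed

lemma card_copies_of_vertex:
  assumes "hypergraph3 V H" "finite C" "\<forall>E\<in>H. u \<in> E \<longrightarrow> E \<inter> C = {}"
  shows "card {insert w (E - {u}) | E w. E \<in> H \<and> u \<in> E \<and> w \<in> C} = deg V H u * card C"
proof -
  define copy where "copy = (\<lambda>(E, w). insert w (E - {u}))"
  have "inj_on copy ({E \<in> H. u \<in> E} \<times> C)"
  proof (rule inj_onI, clarify)
    fix E1 w1 E2 w2
    assume E1: "E1 \<in> H" "u \<in> E1" "w1 \<in> C" and E2: "E2 \<in> H" "u \<in> E2" "w2 \<in> C"
      and eq: "copy (E1, w1) = copy (E2, w2)"
    have out: "w1 \<notin> E1" "w1 \<notin> E2" "w2 \<notin> E2" using assms(3) E1 E2 by blast+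
    then have "w1 = w2" using eq by (auto simp: copy_def)
    then have "E1 - {u} = E2 - {u}" using eq out by (simp add: copy_def insert_ident)
    then show "E1 = E2 \<and> w1 = w2" using E1(2) E2(2) \<open>w1 = w2\<close> by (metis insert_Diff)
  qed
  moreover have "{insert w (E - {u}) | E w. E \<in> H \<and> u \<in> E \<and> w \<in> C} = copy ` ({E \<in> H. u \<in> E} \<times> C)"
    by (auto simp: copy_def)
  ultimately show ?thesis
    by (simp add: card_image card_cartesian_product card_edges_containing[OF assms(1)])
qed

lemma sym_step_hypergraph3:
  assumes "hypergraph3 V H" "sym_step V H H'"
  shows "hypergraph3 V H'"
proof -
  obtain u v where uv: "\<not> adjacent H u v" "\<not> equivalent V H u v"
    and H': "H' = {E \<in> H. E \<inter> eqclass V H v = {}}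
      \<union> {insert w (E - {u}) | E w. E \<in> H \<and> u \<in> E \<and> w \<in> eqclass V H v}"
    using assms(2) unfolding sym_step_def by blast
  have "insert w (E - {u}) \<subseteq> V \<and> card (insert w (E - {u})) = 3"
    if "E \<in> H" "u \<in> E" "w \<in> eqclass V H v" for E w
  proof -
    have "w \<notin> E" using edge_disjoint_eqclass[OF assms(1) uv that(1,2)] that(3) by blast
    then show ?thesis
      using that hypergraph3_edge_subset[OF assms(1)] hypergraph3_edge_card[OF assms(1)]
        hypergraph3_edge_finite[OF assms(1)]
      by (auto simp: eqclass_def)
  qed
  then show ?thesis using assms(1) unfolding H' hypergraph3_def by blast
qed

lemma card_le_sym_step:
  assumes "hypergraph3 V H" "sym_step V H H'"
  shows "card H \<le> card H'"
proof -
  obtain u v where uv: "\<not> adjacent H u v" "\<not> equivalent V H u v" "deg V H v \<le> deg V H u"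
    and H': "H' = {E \<in> H. E \<inter> eqclass V H v = {}}
      \<union> {insert w (E - {u}) | E w. E \<in> H \<and> u \<in> E \<and> w \<in> eqclass V H v}"
    using assms(2) unfolding sym_step_def by blast
  define C where "C = eqclass V H v"
  define Kept where "Kept = {E \<in> H. E \<inter> C = {}}"
  define Copies where "Copies = {insert w (E - {u}) | E w. E \<in> H \<and> u \<in> E \<and> w \<in> C}"
  have finH: "finite H" using hypergraph3_finite[OF assms(1)] .
  have finC: "finite C"
    using assms(1) by (auto simp: C_def eqclass_def hypergraph3_def)
  have "card H = card (Kept \<union> {E \<in> H. E \<inter> C \<noteq> {}})"
    by (rule arg_cong[where f = card]) (auto simp: Kept_def)
  also have "\<dots> = card Kept + card {E \<in> H. E \<inter> C \<noteq> {}}"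
    using finH by (intro card_Un_disjoint) (auto simp: Kept_def)
  also have "\<dots> \<le> card Kept + card C * deg V H v"
    using card_edges_meeting_le[OF assms(1) finC] deg_eqclass[of _ V H v] by (simp add: C_def)
  also have "\<dots> \<le> card Kept + card Copies"
    using uv(3) card_copies_of_vertex[OF assms(1) finC] edge_disjoint_eqclass[OF assms(1) uv(1,2)]
    by (simp add: C_def Copies_def mult.commute)
  also have "\<dots> = card H'"
  proof -
    have "Kept \<inter> Copies = {}" by (auto simp: Kept_def Copies_def)
    moreover have "H' = Kept \<union> Copies" by (simp add: H' Kept_def Copies_def C_def)
    moreover have "finite H'" using hypergraph3_finite[OF sym_step_hypergraph3[OF assms]] .
    ultimately show ?thesis by (simp add: card_Un_disjoint)
  qed
  finally show ?thesis .
qed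

lemma rtranclp_sym_step_hypergraph3_card_le:
  assumes "hypergraph3 V H" "(sym_step V)\<^sup>*\<^sup>* H H'"
  shows "hypergraph3 V H' \<and> card H \<le> card H'"
  using assms(2)
proof (induction rule: rtranclp_induct)
  case base
  then show ?case using assms(1) by simp
next
  case (step H1 H2)
  then show ?case using sym_step_hypergraph3 card_le_sym_step le_trans by blast
qed

lemma transversal_retraction:
  assumes "T \<subseteq> V" "\<forall>x\<in>V. \<exists>!t. t \<in> T \<and> equivalent V H t x"
  obtains \<phi> where "\<forall>x\<in>V. \<phi> x \<in> T \<and> equivalent V H (\<phi> x) x" "\<forall>t\<in>T. \<phi> t = t"
proof
  define \<phi> where "\<phi> x = (THE t. t \<in> T \<and> equivalent V H t x)" for x
  show "\<forall>x\<in>V. \<phi> x \<in> T \<and> equivalent V H (\<phi> x) x"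
  proof
    fix x assume "x \<in> V"
    then have "\<exists>!t. t \<in> T \<and> equivalent V H t x" using assms(2) by blast
    then show "\<phi> x \<in> T \<and> equivalent V H (\<phi> x) x"
      unfolding \<phi>_def by (rule theI')
  qed
  show "\<forall>t\<in>T. \<phi> t = t"
  proof
    fix t assume t: "t \<in> T"
    then have "\<exists>!s. s \<in> T \<and> equivalent V H s t" using assms by blast
    then show "\<phi> t = t" unfolding \<phi>_def by (rule the1_equality) (simp add: t)
  qed
qed

lemma is_blowup_induced_transversal:
  assumes hg: "hypergraph3 V H" and "T \<subseteq> V"
    and \<phi>: "\<forall>x\<in>V. \<phi> x \<in> T \<and> equivalent V H (\<phi> x) x" "\<forall>t\<in>T. \<phi> t = t"
  shows "is_blowup V H T (induced H T)"
  unfolding is_blowup_def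
proof (intro exI conjI)
  show "\<phi> ` V = T"
  proof
    show "T \<subseteq> \<phi> ` V" using assms(2) \<phi>(2) by (metis image_eqI subsetD subsetI)
  qed (use \<phi>(1) in blast)
  show "H = {E. E \<subseteq> V \<and> card E = 3 \<and> inj_on \<phi> E \<and> \<phi> ` E \<in> induced H T}"
  proof (intro set_eqI iffI)
    fix E assume E: "E \<in> H"
    then have "\<forall>x\<in>E. equivalent V H (\<phi> x) x" using \<phi>(1) hypergraph3_edge_subset[OF hg] by blast
    then show "E \<in> {E. E \<subseteq> V \<and> card E = 3 \<and> inj_on \<phi> E \<and> \<phi> ` E \<in> induced H T}"
      using E \<phi>(1) hypergraph3_edge_subset[OF hg E] hypergraph3_edge_card[OF hg E]
        equivalent_image_edge[OF hg E] inj_on_equivalent_edge[OF hg E]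
      by (auto simp: induced_def)
  next
    fix E assume "E \<in> {E. E \<subseteq> V \<and> card E = 3 \<and> inj_on \<phi> E \<and> \<phi> ` E \<in> induced H T}"
    then have E: "E \<subseteq> V" "inj_on \<phi> E" "\<phi> ` E \<in> H" by (simp_all add: induced_def)
    have "\<forall>y\<in>\<phi> ` E. equivalent V H (the_inv_into E \<phi> y) y"
      using E(1,2) \<phi>(1) by (auto simp: the_inv_into_f_f intro: equivalent_sym)
    then have "the_inv_into E \<phi> ` \<phi> ` E \<in> H" by (rule equivalent_image_edge[OF hg E(3)])
    then show "E \<in> H" using E(2) by (simp add: the_inv_into_onto)
  qed
qed

lemma two_covered_transversal:
  assumes hg: "hypergraph3 V H" and "sym_terminal V H" and "T \<subseteq> V"
    and T: "\<forall>x\<in>V. \<exists>!t. t \<in> T \<and> equivalent V H t x"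
  shows "two_covered T (induced H T)"
  unfolding two_covered_def
proof (intro ballI impI)
  obtain \<phi> where \<phi>: "\<forall>x\<in>V. \<phi> x \<in> T \<and> equivalent V H (\<phi> x) x" "\<forall>t\<in>T. \<phi> t = t"
    using transversal_retraction[OF assms(3) T] by blast
  fix x y assume xy: "x \<in> T" "y \<in> T" "x \<noteq> y"
  have "\<not> equivalent V H x y"
  proof
    assume "equivalent V H x y"
    moreover have "\<exists>!t. t \<in> T \<and> equivalent V H t y" using T xy(2) assms(3) by blast
    ultimately show False using xy by auto
  qed
  then obtain E where E: "E \<in> H" "x \<in> E" "y \<in> E"
    using assms(2,3) xy unfolding sym_terminal_def adjacent_def by blast
  then have "\<forall>z\<in>E. equivalent V H (\<phi> z) z" using \<phi>(1) hypergraph3_edge_subset[OF hg] by blast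
  then have "\<phi> ` E \<in> induced H T"
    using equivalent_image_edge[OF hg E(1)] \<phi>(1) hypergraph3_edge_subset[OF hg E(1)]
    by (auto simp: induced_def)
  moreover have "x \<in> \<phi> ` E" "y \<in> \<phi> ` E" using E(2,3) xy(1,2) \<phi>(2) by (metis image_eqI)+
  ultimately show "\<exists>E\<in>induced H T. x \<in> E \<and> y \<in> E" by blast
qed

theorem lemma4p6:
  fixes V :: "'a set" and H Ht :: "'a set set" and T :: "'a set"
  assumes "hypergraph3 V H"
    and "(sym_step V)\<^sup>*\<^sup>* H Ht"
    and "sym_terminal V Ht"
    and "T \<subseteq> V"
    and "\<forall>x\<in>V. \<exists>!t. t \<in> T \<and> equivalent V Ht t x"
  shows "card Ht \<ge> card H
    \<and> two_covered T (induced Ht T) \<and> is_blowup V Ht T (induced Ht T)"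
proof -
  have hg: "hypergraph3 V Ht" and "card H \<le> card Ht"
    using rtranclp_sym_step_hypergraph3_card_le[OF assms(1,2)] by simp_all
  moreover have "two_covered T (induced Ht T)"
    using two_covered_transversal[OF hg assms(3-5)] .
  moreover obtain \<phi> where "\<forall>x\<in>V. \<phi> x \<in> T \<and> equivalent V Ht (\<phi> x) x" "\<forall>t\<in>T. \<phi> t = t"
    using transversal_retraction[OF assms(4,5)] by blast
  then have "is_blowup V Ht T (induced Ht T)"
    using is_blowup_induced_transversal[OF hg assms(4)] by blast
  ultimately show ?thesis by simp
qed

end
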